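(* Let $\mathcal{F}$ be a clique tree forest (CTF) in which every clique tree is valid and calibrated. Let $\mathcal{F}'$ be obtained from $\mathcal{F}$ by a finite sequence of the operations (O1)–(O4) described in the context, each applied to the current forest. Then every clique tree of $\mathcal{F}'$ is a valid clique tree.
   Context: All variables are discrete with finite domains; $D_v$ denotes the domain of variable $v$. A clique tree (CT) is a tree whose nodes are cliques (sets of variables) $C_i$, each carrying a nonnegative clique belief $\beta(C_i)$ (a function of the states of the variables in $C_i$). Each edge $(C_i,C_j)$ carries a sepset $S_{i,j}=C_i\cap C_j$ and a nonnegative sepset belief $\mu(S_{i,j})$. A clique tree forest (CTF) is a disjoint collection of clique trees. A CT is valid if every sepset is nonempty and equals the intersection of its two endpoint cliques, and the running intersection property holds: for every variable $v$, the cliques containing $v$ form a connected subtree. A CT is calibrated if for every edge $(C_i,C_j)$ we have $\sum_{C_i\setminus S_{i,j}}\beta(C_i)=\mu(S_{i,j})=\sum_{C_j\setminus S_{i,j}}\beta(C_j)$. The normalization constant of a calibrated CT is $Z=\sum_{C}\beta(C)$, the sum of any one clique belief over all joint states of that clique's variables (for a calibrated tree this does not depend on the clique chosen). A clique $C$ is non-maximal if $C\subseteq C'$ for some neighbouring clique $C'$. The operations are: (O1) Restriction: replace a CT by a connected subtree of it (keeping the beliefs of the retained cliques and sepsets), or delete a CT entirely. (O2) Exact marginalization of a variable $v$: let $ST_v$ be the (connected) subtree of all cliques containing $v$. Replace $ST_v$ by a single clique $C_c=\big(\bigcup_{C\in ST_v}C\big)\setminus\{v\}$ with belief $\beta(C_c)=\sum_{D_v}\frac{\prod_{C\in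 ST_v}\beta(C)}{\prod_{S\in ST_v}\mu(S)}$, where the denominator ranges over the sepsets of edges inside $ST_v$. Every edge joining a clique of $ST_v$ to a clique $N$ outside $ST_v$ is replaced by an edge between $C_c$ and $N$, with the same sepset and sepset belief. (When $ST_v$ is a single clique this is just summing $v$ out of its belief.) (O3) Local marginalization of a variable $v$: choose a nonempty connected subtree $ST_r$ of the cliques containing $v$. Remove $v$ from every clique containing $v$ that is not in $ST_r$, and from every sepset that contains $v$ and is not an edge inside $ST_r$. Each modified clique $C'=C\setminus\{v\}$ gets belief $\beta(C')=\sum_{D_v}\beta(C)$. Each modified sepset $S'=S\setminus\{v\}$ gets belief $\mu(S')=\sum_{D_v}\mu(S)$. The operation is only allowed if no sepset becomes empty, so that the tree stays connected. (O4) Removal of a non-maximal clique: if $C\subseteq C'$ for a neighbour $C'$, delete $C$ and the edge $(C,C')$. Connect each other neighbour $N$ of $C$ to $C'$, with sepset $N\cap C'$ and sepset belief equal to the former belief $\mu(N\cap C)$. *)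

theory Defs
  imports Complex_Main "HOL-Library.FuncSet"
begin

text \<open>Variables have type 'v, states type 's; D v is the (finite) domain of v.
An assignment is a function 'v => 's; the joint states of a set of variables C
are the extensional assignments PiE C D.  A belief is a real-valued function on
assignments (only its values on PiE C D matter).  Nodes of a clique tree have
type 'n, edges are two-element node sets.\<close>

record ('n, 'v, 's) ctree =
  nodes :: "'n set"
  edges :: "'n set set"
  clq   :: "'n \<Rightarrow> 'v set"
  bel   :: "'n \<Rightarrow> ('v \<Rightarrow> 's) \<Rightarrow> real"
  sep   :: "'n set \<Rightarrow> 'v set"
  sbel  :: "'n set \<Rightarrow> ('v \<Rightarrow> 's) \<Rightarrow> real"

type_synonym ('n, 'v, 's) forest = "('n, 'v, 's) ctree list"

definition adj_on :: "'n set set \<Rightarrow> 'n set \<Rightarrow> ('n \<times> 'n) set" where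
  "adj_on E S = {(a, b). a \<in> S \<and> b \<in> S \<and> {a, b} \<in> E}"

definition conn_on :: "'n set set \<Rightarrow> 'n set \<Rightarrow> bool" where
  "conn_on E S \<longleftrightarrow> (\<forall>a\<in>S. \<forall>b\<in>S. (a, b) \<in> (adj_on E S)\<^sup>*)"

text \<open>Structural well-formedness: the underlying graph is a (finite, nonempty) tree,
i.e. connected with |E| = |N| - 1; cliques are finite sets of variables.\<close>
definition ct_struct :: "('n, 'v, 's) ctree \<Rightarrow> bool" where
  "ct_struct T \<longleftrightarrow>
     finite (nodes T) \<and> nodes T \<noteq> {} \<and>
     edges T \<subseteq> {{a, b} | a b. a \<in> nodes T \<and> b \<in> nodes T \<and> a \<noteq> b} \<and>
     conn_on (edges T) (nodes T) \<and>
     card (edges T) + 1 = card (nodes T) \<and>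
     (\<forall>n\<in>nodes T. finite (clq T n))"

definition ct_nonneg :: "('v \<Rightarrow> 's set) \<Rightarrow> ('n, 'v, 's) ctree \<Rightarrow> bool" where
  "ct_nonneg D T \<longleftrightarrow>
     (\<forall>n\<in>nodes T. \<forall>x\<in>PiE (clq T n) D. 0 \<le> bel T n x) \<and>
     (\<forall>e\<in>edges T. \<forall>x\<in>PiE (sep T e) D. 0 \<le> sbel T e x)"

definition valid_ct :: "('n, 'v, 's) ctree \<Rightarrow> bool" where
  "valid_ct T \<longleftrightarrow> ct_struct T \<and>
     (\<forall>a b. {a, b} \<in> edges T \<longrightarrow> sep T {a, b} \<noteq> {} \<and> sep T {a, b} = clq T a \<inter> clq T b) \<and>
     (\<forall>v. conn_on (edges T) {n \<in> nodes T. v \<in> clq T n})"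

definition marg :: "('v \<Rightarrow> 's set) \<Rightarrow> 'v set \<Rightarrow> 'v set \<Rightarrow> (('v \<Rightarrow> 's) \<Rightarrow> real)
                     \<Rightarrow> ('v \<Rightarrow> 's) \<Rightarrow> real" where
  "marg D C S beta x = (\<Sum>y\<in>PiE (C - S) D. beta (\<lambda>u. if u \<in> S then x u else y u))"

definition calibrated :: "('v \<Rightarrow> 's set) \<Rightarrow> ('n, 'v, 's) ctree \<Rightarrow> bool" where
  "calibrated D T \<longleftrightarrow>
     (\<forall>a b. {a, b} \<in> edges T \<longrightarrow>
        (\<forall>x\<in>PiE (sep T {a, b}) D.
           marg D (clq T a) (sep T {a, b}) (bel T a) x = sbel T {a, b} x \<and>
           marg D (clq T b) (sep T {a, b}) (bel T b) x = sbel T {a, b} x))"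

definition op_restrict :: "('n, 'v, 's) ctree \<Rightarrow> ('n, 'v, 's) ctree \<Rightarrow> bool" where
  "op_restrict T T' \<longleftrightarrow>
     (\<exists>N'. N' \<subseteq> nodes T \<and> N' \<noteq> {} \<and> conn_on (edges T) N' \<and>
        T' = T\<lparr>nodes := N', edges := {e \<in> edges T. e \<subseteq> N'}\<rparr>)"

text \<open>(O2) exact marginalization of v; the merged clique gets a node name c
not used by the remaining nodes.\<close>
definition op_exact :: "('v \<Rightarrow> 's set) \<Rightarrow> ('n, 'v, 's) ctree \<Rightarrow> ('n, 'v, 's) ctree \<Rightarrow> bool" where
  "op_exact D T T' \<longleftrightarrow>
     (\<exists>v c. let ST = {n \<in> nodes T. v \<in> clq T n} in
        ST \<noteq> {} \<and> c \<notin> nodes T - ST \<and>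
        nodes T' = (nodes T - ST) \<union> {c} \<and>
        edges T' = {e \<in> edges T. e \<inter> ST = {}} \<union>
                   {{c, m} | a m. a \<in> ST \<and> m \<notin> ST \<and> {a, m} \<in> edges T} \<and>
        (\<forall>n \<in> nodes T - ST. clq T' n = clq T n \<and> bel T' n = bel T n) \<and>
        clq T' c = (\<Union>n\<in>ST. clq T n) - {v} \<and>
        (\<forall>x\<in>PiE (clq T' c) D.
           bel T' c x =
             (\<Sum>d\<in>D v. (\<Prod>n\<in>ST. bel T n (restrict (x(v := d)) (clq T n)))
                     / (\<Prod>e\<in>{e \<in> edges T. e \<subseteq> ST}. sbel T e (restrict (x(v := d)) (sep T e))))) \<and>
        (\<forall>e\<in>edges T. e \<inter> ST = {} \<longrightarrow> sep T' e = sep T e \<and> sbel T' e = sbel T e) \<and>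
        (\<forall>a m. a \<in> ST \<longrightarrow> m \<notin> ST \<longrightarrow> {a, m} \<in> edges T \<longrightarrow>
           sep T' {c, m} = sep T {a, m} \<and> sbel T' {c, m} = sbel T {a, m}))"

text \<open>(O3) local marginalization of v, keeping v only in the connected subtree STr.\<close>
definition op_local :: "('v \<Rightarrow> 's set) \<Rightarrow> ('n, 'v, 's) ctree \<Rightarrow> ('n, 'v, 's) ctree \<Rightarrow> bool" where
  "op_local D T T' \<longleftrightarrow>
     (\<exists>v STr.
        STr \<noteq> {} \<and> STr \<subseteq> {n \<in> nodes T. v \<in> clq T n} \<and> conn_on (edges T) STr \<and>
        (let modn = (\<lambda>n. n \<in> nodes T \<and> v \<in> clq T n \<and> n \<notin> STr);
             mode = (\<lambda>e. e \<in> edges T \<and> v \<in> sep T e \<and> \<not> e \<subseteq> STr) in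
          (\<forall>e. mode e \<longrightarrow> sep T e - {v} \<noteq> {}) \<and>
          T' = T\<lparr>clq := (\<lambda>n. if modn n then clq T n - {v} else clq T n),
                 bel := (\<lambda>n. if modn n then (\<lambda>x. \<Sum>d\<in>D v. bel T n (x(v := d))) else bel T n),
                 sep := (\<lambda>e. if mode e then sep T e - {v} else sep T e),
                 sbel := (\<lambda>e. if mode e then (\<lambda>x. \<Sum>d\<in>D v. sbel T e (x(v := d))) else sbel T e)\<rparr>))"

definition op_remove :: "('n, 'v, 's) ctree \<Rightarrow> ('n, 'v, 's) ctree \<Rightarrow> bool" where
  "op_remove T T' \<longleftrightarrow>
     (\<exists>C C'. {C, C'} \<in> edges T \<and> clq T C \<subseteq> clq T C' \<and>
        nodes T' = nodes T - {C} \<and>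
        edges T' = {e \<in> edges T. C \<notin> e} \<union> {{m, C'} | m. {m, C} \<in> edges T \<and> m \<noteq> C'} \<and>
        (\<forall>n\<in>nodes T'. clq T' n = clq T n \<and> bel T' n = bel T n) \<and>
        (\<forall>e\<in>edges T. C \<notin> e \<longrightarrow> sep T' e = sep T e \<and> sbel T' e = sbel T e) \<and>
        (\<forall>m. {m, C} \<in> edges T \<longrightarrow> m \<noteq> C' \<longrightarrow>
           sep T' {m, C'} = clq T m \<inter> clq T C' \<and> sbel T' {m, C'} = sbel T {m, C}))"

definition tree_op :: "('v \<Rightarrow> 's set) \<Rightarrow> ('n, 'v, 's) ctree \<Rightarrow> ('n, 'v, 's) ctree \<Rightarrow> bool" where
  "tree_op D T T' \<longleftrightarrow> op_restrict T T' \<or> op_exact D T T' \<or> op_local D T T' \<or> op_remove T T'"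

text \<open>One step on a forest: delete the i-th tree (O1), or replace it by the result
of one operation.\<close>
definition forest_step :: "('v \<Rightarrow> 's set) \<Rightarrow> ('n, 'v, 's) forest \<Rightarrow> ('n, 'v, 's) forest \<Rightarrow> bool" where
  "forest_step D F F' \<longleftrightarrow>
     (\<exists>i < length F. F' = take i F @ drop (Suc i) F \<or>
                     (\<exists>T'. tree_op D (F ! i) T' \<and> F' = F[i := T']))"

end

theory Submission
  imports Defs
begin

text \<open>Validity is a structural property of the tree, its cliques and its sepsets.

The combinatorial core is a counting characterisation of subtrees: a nonempty node set X of a tree
spans at most |X| - 1 edges, with equality exactly when X is connected. Hence intersections of
subtrees are subtrees, a connected node set induces a tree, and contracting a subtree to a single
node yields a tree. Exact marginalisation of v contracts the subtree of cliques containing v, and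
removing a clique C contained in its neighbour C' contracts the edge between them; connected sets
are mapped to connected sets, which transfers the running intersection property. On a new edge
between the merged clique and an outside neighbour m the old sepset is still the intersection,
because every variable shared by m and the subtree lies in the unique neighbour of m in the
subtree. Local marginalisation keeps the edges and leaves v exactly on a connected subtree.\<close>

definition induced_edges :: "'n set set \<Rightarrow> 'n set \<Rightarrow> 'n set set" where
  "induced_edges E X = {e \<in> E. e \<subseteq> X}"

definition tree_graph :: "'n set \<Rightarrow> 'n set set \<Rightarrow> bool" where
  "tree_graph N E \<longleftrightarrow>
     finite N \<and> N \<noteq> {} \<and> E \<subseteq> {{a, b} | a b. a \<in> N \<and> b \<in> N \<and> a \<noteq> b} \<and>
     conn_on E N \<and> card E + 1 = card N"

definition contract :: "'n set \<Rightarrow> 'n \<Rightarrow> 'n \<Rightarrow> 'n" where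
  "contract X c n = (if n \<in> X then c else n)"

definition contract_edges :: "'n set set \<Rightarrow> 'n set \<Rightarrow> 'n \<Rightarrow> 'n set set" where
  "contract_edges E X c = (\<lambda>e. contract X c ` e) ` (E - induced_edges E X)"

section \<open>Connectivity\<close>

lemma adj_on_mono: "E \<subseteq> E' \<Longrightarrow> S \<subseteq> S' \<Longrightarrow> adj_on E S \<subseteq> adj_on E' S'"
  by (auto simp: adj_on_def)

lemma adj_on_induced_edges: "X \<subseteq> Y \<Longrightarrow> adj_on (induced_edges E Y) X = adj_on E X"
  by (auto simp: adj_on_def induced_edges_def)

lemma conn_on_Un:
  assumes "conn_on E A" "conn_on E B" "z \<in> A" "z \<in> B"
  shows "conn_on E (A \<union> B)"
proof -
  let ?R = "(adj_on E (A \<union> B))\<^sup>*"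
  have A: "(adj_on E A)\<^sup>* \<subseteq> ?R" and B: "(adj_on E B)\<^sup>* \<subseteq> ?R"
    by (simp_all add: adj_on_mono rtrancl_mono)
  have "(a, z) \<in> ?R \<and> (z, a) \<in> ?R" if "a \<in> A \<union> B" for a
    using that assms A B unfolding conn_on_def by blast
  then show ?thesis
    unfolding conn_on_def by (blast intro: rtrancl_trans)
qed

lemma conn_on_empty [simp]: "conn_on E {}"
  by (simp add: conn_on_def)

lemma conn_on_edge: "{a, b} \<in> E \<Longrightarrow> conn_on E {a, b}"
  unfolding conn_on_def adj_on_def by (auto intro!: r_into_rtrancl simp: insert_commute)

lemma conn_on_image:
  assumes "conn_on E X" and "\<And>a b. {a, b} \<in> E \<Longrightarrow> g a \<noteq> g b \<Longrightarrow> {g a, g b} \<in> E'"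
  shows "conn_on E' (g ` X)"
proof -
  have step: "(g a, g b) \<in> (adj_on E' (g ` X))\<^sup>*" if "(a, b) \<in> adj_on E X" for a b
    using that assms(2)[of a b] by (cases "g a = g b") (auto simp: adj_on_def)
  have "(g a, g b) \<in> (adj_on E' (g ` X))\<^sup>*" if "(a, b) \<in> (adj_on E X)\<^sup>*" for a b
    using that by induction (auto intro: rtrancl_trans step)
  then show ?thesis
    using assms(1) unfolding conn_on_def by blast
qed

lemma contract_in [simp]: "n \<in> X \<Longrightarrow> contract X c n = c"
  and contract_notin [simp]: "n \<notin> X \<Longrightarrow> contract X c n = n"
  by (simp_all add: contract_def)

lemma conn_on_contract: "conn_on E S \<Longrightarrow> conn_on (contract_edges E X c) (contract X c ` S)"
proof (erule conn_on_image)
  fix a b assume "{a, b} \<in> E" "contract X c a \<noteq> contract X c b"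
  then have "{a, b} \<in> E - induced_edges E X"
    by (auto simp: induced_edges_def contract_def)
  then show "{contract X c a, contract X c b} \<in> contract_edges E X c"
    unfolding contract_edges_def by (rule rev_image_eqI) simp
qed

section \<open>Counting edges in trees\<close>

lemma finite_induced_edges: "finite X \<Longrightarrow> finite (induced_edges E X)"
  by (rule finite_subset[of _ "Pow X"]) (auto simp: induced_edges_def)

text \<open>Every node other than a root r has a neighbour strictly closer to r; the edges to
these parents are distinct.\<close>
lemma card_le_card_induced_edges:
  assumes "finite X" "X \<noteq> {}" "conn_on E X"
  shows "card X \<le> card (induced_edges E X) + 1"
proof -
  obtain r where r: "r \<in> X" using assms(2) by blast
  let ?R = "adj_on E X"
  define dist where "dist x = (LEAST k. (r, x) \<in> ?R ^^ k)" for x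
  have parent: "\<exists>y. (y, x) \<in> ?R \<and> dist y < dist x" if "x \<in> X - {r}" for x
  proof -
    have "\<exists>k. (r, x) \<in> ?R ^^ k"
      using assms(3) r that unfolding conn_on_def rtrancl_power by blast
    then have d: "(r, x) \<in> ?R ^^ dist x"
      unfolding dist_def by (rule LeastI_ex)
    with that obtain k where k: "dist x = Suc k"
      by (cases "dist x") auto
    with d obtain y where "(r, y) \<in> ?R ^^ k" "(y, x) \<in> ?R"
      by auto
    moreover from this(1) have "dist y \<le> k"
      unfolding dist_def by (rule Least_le)
    ultimately show ?thesis
      using k by auto
  qed
  define p where "p x = (SOME y. (y, x) \<in> ?R \<and> dist y < dist x)" for x
  have p: "(p x, x) \<in> ?R \<and> dist (p x) < dist x" if "x \<in> X - {r}" for x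
    unfolding p_def using parent[OF that] by (rule someI_ex)
  have "inj_on (\<lambda>x. {x, p x}) (X - {r})"
  proof (rule inj_onI)
    fix x x' assume x: "x \<in> X - {r}" "x' \<in> X - {r}" and eq: "{x, p x} = {x', p x'}"
    show "x = x'"
      using p[OF x(1)] p[OF x(2)] eq by (auto simp: doubleton_eq_iff)
  qed
  moreover have "(\<lambda>x. {x, p x}) ` (X - {r}) \<subseteq> induced_edges E X"
    using p by (auto simp: induced_edges_def adj_on_def insert_commute)
  ultimately have "card (X - {r}) \<le> card (induced_edges E X)"
    using finite_induced_edges[OF assms(1)] by (rule card_inj_on_le)
  then show ?thesis
    using assms(1) r by simp
qed

lemma tree_graph_edge:
  assumes "tree_graph N E" "e \<in> E"
  obtains a b where "e = {a, b}" "a \<noteq> b" "a \<in> N" "b \<in> N"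
  using assms unfolding tree_graph_def by blast

lemma tree_graph_doubleton_edge:
  assumes "tree_graph N E" "{a, b} \<in> E"
  shows "a \<noteq> b" "a \<in> N" "b \<in> N"
  using assms by (auto elim!: tree_graph_edge simp: doubleton_eq_iff)

lemma tree_graph_finite_edges:
  assumes "tree_graph N E"
  shows "finite E"
proof -
  have "E \<subseteq> Pow N"
    using assms by (auto elim!: tree_graph_edge)
  then show ?thesis
    using assms finite_subset unfolding tree_graph_def by blast
qed

lemma card_contract_edges_le:
  assumes "finite E"
  shows "card (contract_edges E X c) \<le> card E - card (induced_edges E X)"
proof -
  have "card (contract_edges E X c) \<le> card (E - induced_edges E X)"
    unfolding contract_edges_def using assms by (intro card_image_le) simp
  also have "\<dots> = card E - card (induced_edges E X)"
    using assms by (intro card_Diff_subset) (auto simp: induced_edges_def intro: finite_subset)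
  finally show ?thesis .
qed

lemma contract_image:
  assumes "X \<subseteq> N" "c \<in> X \<or> c \<notin> N" "X \<noteq> {}"
  shows "contract X c ` N = insert c (N - X)"
  using assms by (auto simp: contract_def)

lemma tree_graph_card_contract:
  assumes T: "tree_graph N E" and X: "X \<subseteq> N" "X \<noteq> {}" and c: "c \<notin> N - X"
  shows card_contract_image: "card (contract X c ` N) = card N - card X + 1"
    and card_contract_image_le: "card (contract X c ` N) \<le> card (contract_edges E X c) + 1"
proof -
  let ?N' = "contract X c ` N" and ?E' = "contract_edges E X c"
  have fin: "finite N" "finite E" "conn_on E N"
    using T tree_graph_finite_edges unfolding tree_graph_def by blast+
  have N': "?N' = insert c (N - X)"
    using X c by (intro contract_image) auto
  show "card ?N' = card N - card X + 1"
    using fin(1) X(1) c by (simp add: N' card_Diff_subset finite_subset)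
  have "card ?N' \<le> card (induced_edges ?E' ?N') + 1"
    using fin(1,3) by (intro card_le_card_induced_edges conn_on_contract) (auto simp: N')
  also have "card (induced_edges ?E' ?N') \<le> card ?E'"
    using fin(2) by (intro card_mono) (auto simp: contract_edges_def induced_edges_def)
  finally show "card ?N' \<le> card ?E' + 1"
    by simp
qed

text \<open>Contracting X to one of its nodes keeps the tree connected; counting the surviving
edges bounds the edges inside X.\<close>
lemma tree_graph_card_induced_edges_le:
  assumes T: "tree_graph N E" and X: "X \<subseteq> N" "X \<noteq> {}"
  shows "card (induced_edges E X) + 1 \<le> card X"
proof -
  obtain c where c: "c \<in> X" using X by blast
  have fin: "finite N" "finite E" "finite X" "card E + 1 = card N"
    using T X(1) tree_graph_finite_edges finite_subset unfolding tree_graph_def by blast+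
  have c': "c \<notin> N - X"
    using c by simp
  have "card N - card X + 1 \<le> card E - card (induced_edges E X) + 1"
    using tree_graph_card_contract[OF T X c'] card_contract_edges_le[OF fin(2), of X c] by linarith
  moreover have "card X \<le> card N" "card (induced_edges E X) \<le> card E" "0 < card X"
    using fin X by (auto intro!: card_mono simp: induced_edges_def)
  ultimately show ?thesis
    using fin(4) by linarith
qed

lemma card_induced_edges_split:
  assumes X: "finite X" and E: "\<And>e. e \<in> E \<Longrightarrow> \<exists>a b. e = {a, b}" and P: "P \<subseteq> X"
    and closed: "\<And>a b. {a, b} \<in> E \<Longrightarrow> a \<in> P \<Longrightarrow> b \<in> X \<Longrightarrow> b \<in> P"
  shows "card (induced_edges E X) = card (induced_edges E P) + card (induced_edges E (X - P))"
proof -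
  have "induced_edges E X \<subseteq> induced_edges E P \<union> induced_edges E (X - P)"
  proof
    fix e assume "e \<in> induced_edges E X"
    then obtain a b where ab: "e = {a, b}" "{a, b} \<in> E" "{b, a} \<in> E" "a \<in> X" "b \<in> X"
      using E unfolding induced_edges_def by (metis insert_commute insert_subset mem_Collect_eq)
    then show "e \<in> induced_edges E P \<union> induced_edges E (X - P)"
      using closed[OF ab(2)] closed[OF ab(3)] by (auto simp: induced_edges_def)
  qed
  then have "induced_edges E X = induced_edges E P \<union> induced_edges E (X - P)"
    using P by (auto simp: induced_edges_def)
  moreover have "induced_edges E P \<inter> induced_edges E (X - P) = {}"
    using E by (fastforce simp: induced_edges_def)
  ultimately show ?thesis
    using X P by (simp add: card_Un_disjoint finite_induced_edges finite_subset)
qed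

text \<open>Split X into the component P of some node and the rest; each part contributes one
edge less than its size.\<close>
lemma tree_graph_card_induced_edges_disconnected:
  assumes T: "tree_graph N E" and X: "X \<subseteq> N" and nc: "\<not> conn_on E X"
  shows "card (induced_edges E X) + 2 \<le> card X"
proof -
  let ?R = "(adj_on E X)\<^sup>*"
  obtain x y where xy: "x \<in> X" "y \<in> X" "(x, y) \<notin> ?R"
    using nc unfolding conn_on_def by blast
  define P where "P = {z \<in> X. (x, z) \<in> ?R}"
  have finX: "finite X"
    using T X finite_subset unfolding tree_graph_def by blast
  have edge_form: "\<And>e. e \<in> E \<Longrightarrow> \<exists>a b. e = {a, b}"
    using T unfolding tree_graph_def by blast
  have closed: "b \<in> P" if "{a, b} \<in> E" "a \<in> P" "b \<in> X" for a b
  proof -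
    have "(a, b) \<in> adj_on E X"
      using that by (auto simp: adj_on_def P_def)
    then show ?thesis
      using that unfolding P_def by (blast intro: rtrancl_into_rtrancl)
  qed
  have "card (induced_edges E X) = card (induced_edges E P) + card (induced_edges E (X - P))"
    by (rule card_induced_edges_split[OF finX edge_form _ closed]) (auto simp: P_def)
  moreover have parts: "P \<subseteq> N" "P \<noteq> {}" "X - P \<subseteq> N" "X - P \<noteq> {}"
    using X xy by (auto simp: P_def)
  ultimately have "card (induced_edges E X) + 2 \<le> card P + card (X - P)"
    using tree_graph_card_induced_edges_le[OF T parts(1,2)] tree_graph_card_induced_edges_le[OF T parts(3,4)]
    by linarith
  also have "\<dots> = card X"
    using finX by (simp add: P_def card_Diff_subset card_mono)
  finally show ?thesis .
qed

lemma tree_graph_conn_on_iff_card: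
  assumes T: "tree_graph N E" and X: "X \<subseteq> N" "X \<noteq> {}"
  shows "conn_on E X \<longleftrightarrow> card (induced_edges E X) + 1 = card X"
proof -
  have "finite X"
    using T X finite_subset unfolding tree_graph_def by blast
  then show ?thesis
    using card_le_card_induced_edges[OF _ X(2), of E] tree_graph_card_induced_edges_le[OF T X]
      tree_graph_card_induced_edges_disconnected[OF T X(1)] by linarith
qed

lemma tree_graph_conn_on_Int:
  assumes T: "tree_graph N E"
    and A: "A \<subseteq> N" "conn_on E A" and B: "B \<subseteq> N" "conn_on E B"
  shows "conn_on E (A \<inter> B)"
proof (cases "A \<inter> B = {}")
  case True
  then show ?thesis by simp
next
  case False
  then obtain z where z: "z \<in> A" "z \<in> B" by blast
  have fin: "finite A" "finite B"
    using T A B finite_subset unfolding tree_graph_def by blast+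
  note card_eq = tree_graph_conn_on_iff_card[OF T, THEN iffD1]
  have "card (induced_edges E A) + 1 = card A" "card (induced_edges E B) + 1 = card B"
    using card_eq[OF A(1) _ A(2)] card_eq[OF B(1) _ B(2)] z by blast+
  moreover have "card (induced_edges E (A \<union> B)) + 1 = card (A \<union> B)"
    using A B z by (intro card_eq conn_on_Un[OF A(2) B(2) z]) auto
  moreover have "card A + card B = card (A \<union> B) + card (A \<inter> B)"
    using fin by (rule card_Un_Int)
  moreover have "card (induced_edges E A) + card (induced_edges E B)
      = card (induced_edges E A \<union> induced_edges E B) + card (induced_edges E (A \<inter> B))"
  proof -
    have "induced_edges E A \<inter> induced_edges E B = induced_edges E (A \<inter> B)"
      by (auto simp: induced_edges_def)
    then show ?thesis
      using card_Un_Int[OF finite_induced_edges finite_induced_edges, OF fin] by simp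
  qed
  moreover have "card (induced_edges E A \<union> induced_edges E B) \<le> card (induced_edges E (A \<union> B))"
    using fin by (intro card_mono finite_induced_edges) (auto simp: induced_edges_def)
  moreover have "card (induced_edges E (A \<inter> B)) + 1 \<le> card (A \<inter> B)"
    using A(1) False by (intro tree_graph_card_induced_edges_le[OF T]) auto
  ultimately have "card (induced_edges E (A \<inter> B)) + 1 = card (A \<inter> B)"
    by linarith
  then show ?thesis
    using tree_graph_conn_on_iff_card[OF T, of "A \<inter> B"] A(1) False by blast
qed

text \<open>Otherwise X together with m would span at least |X| + 1 edges.\<close>
lemma tree_graph_unique_neighbour:
  assumes T: "tree_graph N E" and X: "X \<subseteq> N" "conn_on E X"
    and m: "m \<notin> X" and a: "a \<in> X" "{a, m} \<in> E" and a': "a' \<in> X" "{a', m} \<in> E"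
  shows "a = a'"
proof (rule ccontr)
  assume "a \<noteq> a'"
  have fin: "finite X"
    using T X finite_subset unfolding tree_graph_def by blast
  have mN: "m \<in> N"
    using tree_graph_doubleton_edge[OF T a(2)] by simp
  have two: "card {{a, m}, {a', m}} = 2"
    using \<open>a \<noteq> a'\<close> by (auto simp: card_insert_if doubleton_eq_iff)
  have "induced_edges E X \<inter> {{a, m}, {a', m}} = {}"
    using m by (auto simp: induced_edges_def)
  then have "card (induced_edges E X) + 2 = card (induced_edges E X \<union> {{a, m}, {a', m}})"
    using card_Un_disjoint[OF finite_induced_edges[OF fin, of E]] two by (metis finite.emptyI finite.insertI)
  also have "\<dots> \<le> card (induced_edges E (insert m X))"
    using fin a a' by (intro card_mono finite_induced_edges) (auto simp: induced_edges_def)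
  also have "\<dots> + 1 \<le> card (insert m X)"
    using X(1) mN by (intro tree_graph_card_induced_edges_le[OF T]) auto
  also have "\<dots> = card X + 1"
    using fin m by simp
  finally have "card (induced_edges E X) + 2 \<le> card X"
    by simp
  moreover have "card (induced_edges E X) + 1 = card X"
    using tree_graph_conn_on_iff_card[OF T X(1)] X(2) a by blast
  ultimately show False
    by simp
qed

lemma tree_graph_induced_edges:
  assumes T: "tree_graph N E" and X: "X \<subseteq> N" "X \<noteq> {}" "conn_on E X"
  shows "tree_graph X (induced_edges E X)"
  unfolding tree_graph_def
proof (intro conjI)
  show "finite X"
    using T X(1) finite_subset unfolding tree_graph_def by blast
  show "induced_edges E X \<subseteq> {{a, b} |a b. a \<in> X \<and> b \<in> X \<and> a \<noteq> b}"
  proof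
    fix e assume "e \<in> induced_edges E X"
    then have e: "e \<in> E" "e \<subseteq> X"
      by (simp_all add: induced_edges_def)
    then show "e \<in> {{a, b} |a b. a \<in> X \<and> b \<in> X \<and> a \<noteq> b}"
      by (metis (mono_tags, lifting) tree_graph_edge[OF T e(1)] insert_subset mem_Collect_eq)
  qed
  show "conn_on (induced_edges E X) X"
    using X(3) by (simp add: conn_on_def adj_on_induced_edges)
  show "card (induced_edges E X) + 1 = card X"
    using X tree_graph_conn_on_iff_card[OF T] by blast
qed (fact X(2))

section \<open>Contraction of a subtree\<close>

lemma tree_graph_contract:
  assumes T: "tree_graph N E" and X: "X \<subseteq> N" "X \<noteq> {}" "conn_on E X" and c: "c \<notin> N - X"
  shows "tree_graph (contract X c ` N) (contract_edges E X c)"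
proof -
  let ?N' = "contract X c ` N" and ?E' = "contract_edges E X c"
  have fin: "finite N" "finite E" "card E + 1 = card N" "conn_on E N"
    using T tree_graph_finite_edges unfolding tree_graph_def by blast+
  have N': "?N' = insert c (N - X)"
    using X c by (intro contract_image) auto
  have pairs: "?E' \<subseteq> {{a, b} | a b. a \<in> ?N' \<and> b \<in> ?N' \<and> a \<noteq> b}"
  proof
    fix e assume "e \<in> ?E'"
    then obtain e0 where e0: "e0 \<in> E" "\<not> e0 \<subseteq> X" "e = contract X c ` e0"
      by (auto simp: contract_edges_def induced_edges_def)
    then obtain a b where ab: "e0 = {a, b}" "a \<noteq> b" "a \<in> N" "b \<in> N"
      by (metis tree_graph_edge[OF T e0(1)])
    with e0(2) c have "contract X c a \<noteq> contract X c b"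
      "contract X c a \<in> ?N'" "contract X c b \<in> ?N'"
      by (auto simp: contract_def)
    then show "e \<in> {{a, b} | a b. a \<in> ?N' \<and> b \<in> ?N' \<and> a \<noteq> b}"
      using e0(3) ab(1) by auto
  qed
  have "card ?E' \<le> card E - card (induced_edges E X)"
    using fin(2) by (rule card_contract_edges_le)
  moreover have "card (induced_edges E X) + 1 = card X" "card X \<le> card N"
    using tree_graph_conn_on_iff_card[OF T X(1,2)] X fin(1) by (auto intro: card_mono)
  ultimately have "card ?E' + 1 = card ?N'"
    using tree_graph_card_contract[OF T X(1,2) c] fin(3) by linarith
  moreover have "conn_on ?E' ?N'"
    using fin(4) by (rule conn_on_contract)
  ultimately show ?thesis
    unfolding tree_graph_def using fin(1) pairs by (simp add: N')
qed

lemma contract_edges_eq: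
  assumes "\<And>e. e \<in> E \<Longrightarrow> \<exists>a b. e = {a, b}"
  shows "contract_edges E X c = {e \<in> E. e \<inter> X = {}} \<union> {{c, m} | a m. a \<in> X \<and> m \<notin> X \<and> {a, m} \<in> E}"
proof (intro equalityI subsetI)
  fix e assume "e \<in> contract_edges E X c"
  then obtain e0 where e0: "e0 \<in> E" "\<not> e0 \<subseteq> X" "e = contract X c ` e0"
    by (auto simp: contract_edges_def induced_edges_def)
  obtain a b where ab: "e0 = {a, b}"
    using assms e0(1) by blast
  consider (outside) "a \<notin> X" "b \<notin> X" | (left) "a \<in> X" "b \<notin> X" | (right) "a \<notin> X" "b \<in> X"
    using e0(2) ab by blast
  then show "e \<in> {e \<in> E. e \<inter> X = {}} \<union> {{c, m} | a m. a \<in> X \<and> m \<notin> X \<and> {a, m} \<in> E}"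
  proof cases
    case outside
    then have "e = e0" "e0 \<inter> X = {}"
      using e0(3) ab by auto
    then show ?thesis
      using e0(1) by blast
  next
    case left
    then have "e = {c, b}"
      using e0(3) ab by simp
    then show ?thesis
      using left e0(1) ab by blast
  next
    case right
    then have "e = {c, a}" "{b, a} \<in> E"
      using e0 ab by (simp_all add: insert_commute)
    then show ?thesis
      using right by blast
  qed
next
  fix e assume "e \<in> {e \<in> E. e \<inter> X = {}} \<union> {{c, m} | a m. a \<in> X \<and> m \<notin> X \<and> {a, m} \<in> E}"
  then consider "e \<in> E" "e \<inter> X = {}" | a m where "e = {c, m}" "a \<in> X" "m \<notin> X" "{a, m} \<in> E"
    by blast
  then show "e \<in> contract_edges E X c"
  proof cases
    case 1
    have "e \<in> E - induced_edges E X"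
      using 1 assms[of e] by (auto simp: induced_edges_def)
    moreover have "e = contract X c ` e"
      using 1(2) by (metis (no_types, lifting) contract_notin disjoint_iff image_cong image_ident)
    ultimately show ?thesis
      unfolding contract_edges_def by (rule rev_image_eqI)
  next
    case 2
    then have "{a, m} \<in> E - induced_edges E X" "e = contract X c ` {a, m}"
      by (simp_all add: induced_edges_def)
    then show ?thesis
      unfolding contract_edges_def by (rule rev_image_eqI)
  qed
qed

lemma tree_graph_contract_edge:
  assumes T: "tree_graph N E" and CC': "{C, C'} \<in> E"
  shows "{e \<in> E. C \<notin> e} \<union> {{m, C'} | m. {m, C} \<in> E \<and> m \<noteq> C'} = contract_edges E {C, C'} C'"
proof -
  have edge_form: "\<And>e. e \<in> E \<Longrightarrow> \<exists>a b. e = {a, b} \<and> a \<noteq> b"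
    using T unfolding tree_graph_def by blast
  have "C \<noteq> C'"
    using tree_graph_doubleton_edge[OF T CC'] by simp
  have "{e \<in> E. C \<notin> e} \<union> {{m, C'} | m. {m, C} \<in> E \<and> m \<noteq> C'} =
      {e \<in> E. e \<inter> {C, C'} = {}} \<union> {{C', m} | a m. a \<in> {C, C'} \<and> m \<notin> {C, C'} \<and> {a, m} \<in> E}"
    (is "?L = ?A \<union> ?B")
  proof (intro equalityI subsetI)
    fix e assume "e \<in> ?L"
    then consider "e \<in> E" "C \<notin> e" | m where "e = {m, C'}" "{m, C} \<in> E" "m \<noteq> C'"
      by blast
    then show "e \<in> ?A \<union> ?B"
    proof cases
      case 1
      show ?thesis
      proof (cases "C' \<in> e")
        case True
        obtain a b where "e = {a, b}" "a \<noteq> b"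
          using edge_form 1(1) by blast
        with True 1(2) obtain m where "e = {C', m}" "m \<notin> {C, C'}"
          by (auto simp: doubleton_eq_iff)
        then have "e = {C', m} \<and> C' \<in> {C, C'} \<and> m \<notin> {C, C'} \<and> {C', m} \<in> E"
          using 1(1) by simp
        then show ?thesis
          by blast
      qed (use 1 in blast)
    next
      case 2
      then have "e = {C', m} \<and> C \<in> {C, C'} \<and> m \<notin> {C, C'} \<and> {C, m} \<in> E"
        using tree_graph_doubleton_edge[OF T 2(2)] by (auto simp: insert_commute)
      then show ?thesis
        by blast
    qed
  next
    fix e assume "e \<in> ?A \<union> ?B"
    then consider "e \<in> E" "e \<inter> {C, C'} = {}"
      | a m where "e = {C', m}" "a \<in> {C, C'}" "m \<notin> {C, C'}" "{a, m} \<in> E"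
      by blast
    then show "e \<in> ?L"
    proof cases
      case 2
      show ?thesis
      proof (cases "a = C")
        case True
        then have "e = {m, C'} \<and> {m, C} \<in> E \<and> m \<noteq> C'"
          using 2 by (auto simp: insert_commute)
        then show ?thesis
          by blast
      next
        case False
        then have "e \<in> E" "C \<notin> e"
          using 2 \<open>C \<noteq> C'\<close> by auto
        then show ?thesis
          by blast
      qed
    qed blast
  qed
  also have "\<dots> = contract_edges E {C, C'} C'"
    using edge_form by (intro contract_edges_eq[symmetric]) blast
  finally show ?thesis .
qed

section \<open>Valid clique trees\<close>

lemma ct_struct_iff_tree_graph:
  "ct_struct T \<longleftrightarrow> tree_graph (nodes T) (edges T) \<and> (\<forall>n\<in>nodes T. finite (clq T n))"
  unfolding ct_struct_def tree_graph_def by blast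

lemma valid_ct_tree_graph: "valid_ct T \<Longrightarrow> tree_graph (nodes T) (edges T)"
  by (simp add: valid_ct_def ct_struct_iff_tree_graph)

lemma valid_ct_sep:
  "valid_ct T \<Longrightarrow> {a, b} \<in> edges T \<Longrightarrow> sep T {a, b} \<noteq> {} \<and> sep T {a, b} = clq T a \<inter> clq T b"
  unfolding valid_ct_def by blast

lemma valid_ct_running_intersection: "valid_ct T \<Longrightarrow> conn_on (edges T) {n \<in> nodes T. v \<in> clq T n}"
  by (simp add: valid_ct_def)

lemma valid_ctI:
  assumes "tree_graph (nodes T) (edges T)" "\<And>n. n \<in> nodes T \<Longrightarrow> finite (clq T n)"
    and "\<And>a b. {a, b} \<in> edges T \<Longrightarrow> sep T {a, b} \<noteq> {} \<and> sep T {a, b} = clq T a \<inter> clq T b"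
    and "\<And>v. conn_on (edges T) {n \<in> nodes T. v \<in> clq T n}"
  shows "valid_ct T"
  using assms unfolding valid_ct_def ct_struct_iff_tree_graph by blast

text \<open>The nodes of ST carrying u together with m form a connected set, so the path from m
into ST enters through the unique neighbour a of m in ST.\<close>
lemma valid_ct_clq_at_boundary:
  assumes V: "valid_ct T" and ST: "ST \<subseteq> nodes T" "conn_on (edges T) ST"
    and a: "a \<in> ST" and m: "m \<notin> ST" "{a, m} \<in> edges T"
    and n: "n \<in> ST" "u \<in> clq T n" and u: "u \<in> clq T m"
  shows "u \<in> clq T a"
proof -
  let ?E = "edges T"
  define Y where "Y = {n \<in> nodes T. u \<in> clq T n} \<inter> insert m ST"
  have T: "tree_graph (nodes T) ?E"
    using V by (rule valid_ct_tree_graph)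
  have mN: "m \<in> nodes T"
    using tree_graph_doubleton_edge[OF T m(2)] by simp
  have "conn_on ?E (ST \<union> {a, m})"
    using conn_on_Un[OF ST(2) conn_on_edge[OF m(2)] a] by simp
  then have "conn_on ?E Y"
    unfolding Y_def using ST(1) mN a
    by (intro tree_graph_conn_on_Int[OF T] valid_ct_running_intersection[OF V])
      (auto simp: insert_absorb)
  moreover have "m \<in> Y" "n \<in> Y"
    using u mN n ST(1) by (auto simp: Y_def)
  ultimately have "(m, n) \<in> (adj_on ?E Y)\<^sup>*"
    unfolding conn_on_def by blast
  moreover have "m \<noteq> n"
    using m n by auto
  ultimately obtain a' where a': "(m, a') \<in> adj_on ?E Y"
    by (auto elim: converse_rtranclE)
  then have "{a', m} \<in> ?E" "a' \<noteq> m" "a' \<in> Y"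
    using tree_graph_doubleton_edge[OF T] by (auto simp: adj_on_def insert_commute)
  then have a'ST: "a' \<in> ST" "{a', m} \<in> ?E" and "u \<in> clq T a'"
    by (auto simp: Y_def)
  moreover have "a = a'"
    using tree_graph_unique_neighbour[OF T ST m(1) a m(2) a'ST] .
  ultimately show ?thesis
    by simp
qed

section \<open>The operations preserve validity\<close>

lemma op_restrict_valid:
  assumes V: "valid_ct T" and R: "op_restrict T T'"
  shows "valid_ct T'"
proof -
  obtain N' where N': "N' \<subseteq> nodes T" "N' \<noteq> {}" "conn_on (edges T) N'"
    and struct: "nodes T' = N'" "edges T' = induced_edges (edges T) N'" "clq T' = clq T" "sep T' = sep T"
    using R unfolding op_restrict_def induced_edges_def by force
  have T: "tree_graph (nodes T) (edges T)"
    using V by (rule valid_ct_tree_graph)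
  then have "tree_graph (nodes T') (edges T')"
    unfolding struct using N' by (rule tree_graph_induced_edges)
  moreover have "finite (clq T' n)" if "n \<in> nodes T'" for n
    using V N'(1) that unfolding valid_ct_def ct_struct_def struct by blast
  moreover have "sep T' {a, b} \<noteq> {} \<and> sep T' {a, b} = clq T' a \<inter> clq T' b"
    if "{a, b} \<in> edges T'" for a b
    using valid_ct_sep[OF V, of a b] that unfolding struct induced_edges_def by blast
  moreover have "conn_on (edges T') {n \<in> nodes T'. v \<in> clq T' n}" for v
  proof -
    have "{n \<in> N'. v \<in> clq T n} = N' \<inter> {n \<in> nodes T. v \<in> clq T n}"
      using N'(1) by blast
    then have "conn_on (edges T) {n \<in> N'. v \<in> clq T n}"
      using tree_graph_conn_on_Int[OF T N'(1,3) _ valid_ct_running_intersection[OF V]] by auto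
    then show ?thesis
      unfolding struct by (simp add: conn_on_def adj_on_induced_edges)
  qed
  ultimately show ?thesis
    by (rule valid_ctI)
qed

lemma op_local_valid:
  assumes V: "valid_ct T" and L: "op_local D T T'"
  shows "valid_ct T'"
proof -
  obtain v STr where STr: "STr \<subseteq> {n \<in> nodes T. v \<in> clq T n}" "conn_on (edges T) STr"
    and nonempty: "\<And>e. e \<in> edges T \<Longrightarrow> v \<in> sep T e \<Longrightarrow> \<not> e \<subseteq> STr \<Longrightarrow> sep T e - {v} \<noteq> {}"
    and struct: "nodes T' = nodes T" "edges T' = edges T"
    and clq': "\<And>n. clq T' n = (if n \<in> nodes T \<and> v \<in> clq T n \<and> n \<notin> STr then clq T n - {v} else clq T n)"
    and sep': "\<And>e. sep T' e = (if e \<in> edges T \<and> v \<in> sep T e \<and> \<not> e \<subseteq> STr then sep T e - {v} else sep T e)"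
    using L unfolding op_local_def Let_def by force
  have T: "tree_graph (nodes T) (edges T)"
    using V by (rule valid_ct_tree_graph)
  then have "tree_graph (nodes T') (edges T')"
    by (simp add: struct)
  moreover have "finite (clq T' n)" if "n \<in> nodes T'" for n
    using V that unfolding valid_ct_def ct_struct_def by (simp add: struct clq')
  moreover have "sep T' {a, b} \<noteq> {} \<and> sep T' {a, b} = clq T' a \<inter> clq T' b"
    if "{a, b} \<in> edges T'" for a b
  proof -
    have ab: "{a, b} \<in> edges T" "a \<in> nodes T" "b \<in> nodes T"
      using that tree_graph_doubleton_edge[OF T] by (auto simp: struct)
    have "sep T {a, b} \<noteq> {}" "sep T {a, b} = clq T a \<inter> clq T b"
      using valid_ct_sep[OF V ab(1)] by blast+
    then show ?thesis
      using ab nonempty[OF ab(1)]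
      by (cases "v \<in> sep T {a, b} \<and> \<not> {a, b} \<subseteq> STr") (auto simp: clq' sep')
  qed
  moreover have "conn_on (edges T') {n \<in> nodes T'. u \<in> clq T' n}" for u
  proof -
    have "{n \<in> nodes T'. u \<in> clq T' n} = (if u = v then STr else {n \<in> nodes T. u \<in> clq T n})"
      using STr(1) by (auto simp: struct clq')
    then show ?thesis
      using STr(2) valid_ct_running_intersection[OF V] by (simp add: struct)
  qed
  ultimately show ?thesis
    by (rule valid_ctI)
qed

locale exact_marginalization =
  fixes T T' :: "('n, 'v, 's) ctree" and v :: 'v and c :: 'n and ST :: "'n set"
  assumes valid: "valid_ct T"
    and ST_eq: "ST = {n \<in> nodes T. v \<in> clq T n}" and ST_nonempty: "ST \<noteq> {}"
    and fresh: "c \<notin> nodes T - ST"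
    and nodes': "nodes T' = (nodes T - ST) \<union> {c}"
    and edges': "edges T' = {e \<in> edges T. e \<inter> ST = {}} \<union>
                   {{c, m} | a m. a \<in> ST \<and> m \<notin> ST \<and> {a, m} \<in> edges T}"
    and clq_out: "\<And>n. n \<in> nodes T - ST \<Longrightarrow> clq T' n = clq T n"
    and clq_c: "clq T' c = (\<Union>n\<in>ST. clq T n) - {v}"
    and sep_out: "\<And>e. e \<in> edges T \<Longrightarrow> e \<inter> ST = {} \<Longrightarrow> sep T' e = sep T e"
    and sep_c: "\<And>a m. a \<in> ST \<Longrightarrow> m \<notin> ST \<Longrightarrow> {a, m} \<in> edges T \<Longrightarrow> sep T' {c, m} = sep T {a, m}"
begin

lemma tree: "tree_graph (nodes T) (edges T)"
  using valid by (rule valid_ct_tree_graph)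

lemma ST_subset: "ST \<subseteq> nodes T" and ST_connected: "conn_on (edges T) ST"
  using valid_ct_running_intersection[OF valid] by (auto simp: ST_eq)

lemma edges_contract: "edges T' = contract_edges (edges T) ST c"
  unfolding edges' using tree by (intro contract_edges_eq[symmetric]) (auto simp: tree_graph_def)

lemma result_tree_graph: "tree_graph (nodes T') (edges T')"
proof -
  have "nodes T' = contract ST c ` nodes T"
    using ST_subset ST_nonempty fresh by (subst contract_image) (auto simp: nodes')
  then show ?thesis
    using tree_graph_contract[OF tree ST_subset ST_nonempty ST_connected fresh] edges_contract by simp
qed

lemma result_finite_clq: "n \<in> nodes T' \<Longrightarrow> finite (clq T' n)"
proof -
  have "finite ST" "\<forall>k\<in>nodes T. finite (clq T k)"
    using valid ST_subset finite_subset unfolding valid_ct_def ct_struct_def by blast+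
  then show "n \<in> nodes T' \<Longrightarrow> finite (clq T' n)"
    using ST_subset by (cases "n = c") (auto simp: nodes' clq_c clq_out)
qed

lemma result_sep:
  assumes "{a, b} \<in> edges T'"
  shows "sep T' {a, b} \<noteq> {} \<and> sep T' {a, b} = clq T' a \<inter> clq T' b"
proof -
  from assms consider "{a, b} \<in> edges T" "{a, b} \<inter> ST = {}"
    | a0 m where "{a, b} = {c, m}" "a0 \<in> ST" "m \<notin> ST" "{a0, m} \<in> edges T"
    unfolding edges' by blast
  then show ?thesis
  proof cases
    case 1
    then have "sep T' {a, b} = sep T {a, b}" "clq T' a = clq T a" "clq T' b = clq T b"
      using tree_graph_doubleton_edge[OF tree 1(1)] by (simp_all add: sep_out clq_out)
    then show ?thesis
      using valid_ct_sep[OF valid 1(1)] by auto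
  next
    case 2
    have m: "m \<in> nodes T - ST" "v \<notin> clq T m"
      using tree_graph_doubleton_edge[OF tree 2(4)] 2(3) by (auto simp: ST_eq)
    have "clq T' c \<inter> clq T' m = clq T a0 \<inter> clq T m"
      using valid_ct_clq_at_boundary[OF valid ST_subset ST_connected 2(2-4)] 2(2) m
      by (auto simp: clq_c clq_out)
    moreover have "clq T' a \<inter> clq T' b = clq T' c \<inter> clq T' m"
      using 2(1) by (auto simp: doubleton_eq_iff)
    ultimately show ?thesis
      using valid_ct_sep[OF valid 2(4)] sep_c[OF 2(2-4)] 2(1) by auto
  qed
qed

lemma clq_without_v: "n \<in> nodes T' \<Longrightarrow> v \<notin> clq T' n"
proof (cases "n = c")
  case False
  moreover assume "n \<in> nodes T'"
  ultimately have "n \<in> nodes T - ST"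
    by (simp add: nodes')
  then show ?thesis
    using clq_out[of n] by (simp add: ST_eq)
qed (simp add: clq_c)

lemma clq_contract:
  assumes "u \<noteq> v"
  shows "{n \<in> nodes T'. u \<in> clq T' n} = contract ST c ` {n \<in> nodes T. u \<in> clq T n}"
proof (intro equalityI subsetI)
  fix x assume x: "x \<in> {n \<in> nodes T'. u \<in> clq T' n}"
  show "x \<in> contract ST c ` {n \<in> nodes T. u \<in> clq T n}"
  proof (cases "x = c")
    case True
    then obtain n where "n \<in> ST" "u \<in> clq T n"
      using x by (auto simp: clq_c)
    then show ?thesis
      using ST_subset True by (auto intro!: rev_image_eqI[of n])
  next
    case False
    then show ?thesis
      using x by (auto simp: nodes' clq_out intro!: rev_image_eqI[of x])
  qed
next
  fix x assume "x \<in> contract ST c ` {n \<in> nodes T. u \<in> clq T n}"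
  then obtain n where "n \<in> nodes T" "u \<in> clq T n" "x = contract ST c n"
    by blast
  then show "x \<in> {n \<in> nodes T'. u \<in> clq T' n}"
    using assms by (cases "n \<in> ST") (auto simp: nodes' clq_c clq_out)
qed

lemma result_running_intersection: "conn_on (edges T') {n \<in> nodes T'. u \<in> clq T' n}"
proof (cases "u = v")
  case True
  then have "{n \<in> nodes T'. u \<in> clq T' n} = {}"
    using clq_without_v by blast
  then show ?thesis
    by (simp only: conn_on_empty)
next
  case False
  then show ?thesis
    using conn_on_contract[OF valid_ct_running_intersection[OF valid]]
    by (simp add: clq_contract edges_contract)
qed

lemma result_valid: "valid_ct T'"
  using result_tree_graph result_finite_clq result_sep result_running_intersection
  by (rule valid_ctI)

end

lemma op_exact_valid:
  assumes "valid_ct T" and "op_exact D T T'"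
  shows "valid_ct T'"
proof -
  obtain v c ST where ST: "ST = {n \<in> nodes T. v \<in> clq T n}" "ST \<noteq> {}" "c \<notin> nodes T - ST"
    and nodes_edges: "nodes T' = (nodes T - ST) \<union> {c}"
      "edges T' = {e \<in> edges T. e \<inter> ST = {}} \<union> {{c, m} | a m. a \<in> ST \<and> m \<notin> ST \<and> {a, m} \<in> edges T}"
    and clq_out: "\<forall>n \<in> nodes T - ST. clq T' n = clq T n \<and> bel T' n = bel T n"
    and clq_c: "clq T' c = (\<Union>n\<in>ST. clq T n) - {v}"
    and sep_out: "\<forall>e\<in>edges T. e \<inter> ST = {} \<longrightarrow> sep T' e = sep T e \<and> sbel T' e = sbel T e"
    and sep_c: "\<forall>a m. a \<in> ST \<longrightarrow> m \<notin> ST \<longrightarrow> {a, m} \<in> edges T \<longrightarrow>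
       sep T' {c, m} = sep T {a, m} \<and> sbel T' {c, m} = sbel T {a, m}"
    using assms(2) unfolding op_exact_def Let_def by (-, elim exE conjE) (rule that[OF refl], assumption+)
  have "exact_marginalization T T' v c ST"
    by unfold_locales (fact assms(1) ST nodes_edges clq_c | use clq_out sep_out sep_c in blast)+
  then show ?thesis
    by (rule exact_marginalization.result_valid)
qed

locale clique_removal =
  fixes T T' :: "('n, 'v, 's) ctree" and C C' :: 'n
  assumes valid: "valid_ct T"
    and edge: "{C, C'} \<in> edges T" and subset: "clq T C \<subseteq> clq T C'"
    and nodes': "nodes T' = nodes T - {C}"
    and edges': "edges T' = {e \<in> edges T. C \<notin> e} \<union> {{m, C'} | m. {m, C} \<in> edges T \<and> m \<noteq> C'}"
    and clq': "\<And>n. n \<in> nodes T' \<Longrightarrow> clq T' n = clq T n"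
    and sep_old: "\<And>e. e \<in> edges T \<Longrightarrow> C \<notin> e \<Longrightarrow> sep T' e = sep T e"
    and sep_new: "\<And>m. {m, C} \<in> edges T \<Longrightarrow> m \<noteq> C' \<Longrightarrow> sep T' {m, C'} = clq T m \<inter> clq T C'"
begin

lemma tree: "tree_graph (nodes T) (edges T)"
  using valid by (rule valid_ct_tree_graph)

lemma ends: "C \<noteq> C'" "C \<in> nodes T" "C' \<in> nodes T"
  using tree_graph_doubleton_edge[OF tree edge] by auto

lemma edges_contract: "edges T' = contract_edges (edges T) {C, C'} C'"
  unfolding edges' using tree edge by (rule tree_graph_contract_edge)

lemma result_tree_graph: "tree_graph (nodes T') (edges T')"
proof -
  have "nodes T' = contract {C, C'} C' ` nodes T"
    using ends by (subst contract_image) (auto simp: nodes')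
  then show ?thesis
    unfolding edges_contract using ends
    by (simp add: tree_graph_contract[OF tree] conn_on_edge[OF edge])
qed

lemma result_finite_clq: "n \<in> nodes T' \<Longrightarrow> finite (clq T' n)"
  using valid clq' unfolding valid_ct_def ct_struct_def nodes' by auto

lemma result_sep:
  assumes "{a, b} \<in> edges T'"
  shows "sep T' {a, b} \<noteq> {} \<and> sep T' {a, b} = clq T' a \<inter> clq T' b"
proof -
  from assms consider "{a, b} \<in> edges T" "C \<notin> {a, b}"
    | m where "{a, b} = {m, C'}" "{m, C} \<in> edges T" "m \<noteq> C'"
    unfolding edges' by blast
  then show ?thesis
  proof cases
    case 1
    then have "a \<in> nodes T'" "b \<in> nodes T'"
      using tree_graph_doubleton_edge[OF tree 1(1)] by (auto simp: nodes')
    then show ?thesis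
      using valid_ct_sep[OF valid 1(1)] sep_old 1 clq' by auto
  next
    case 2
    have "m \<in> nodes T'" "C' \<in> nodes T'"
      using tree_graph_doubleton_edge[OF tree 2(2)] ends by (auto simp: nodes')
    then have "clq T' a \<inter> clq T' b = clq T m \<inter> clq T C'"
      using 2(1) clq' by (auto simp: doubleton_eq_iff)
    moreover have "clq T m \<inter> clq T C \<noteq> {}"
      using valid_ct_sep[OF valid 2(2)] by auto
    ultimately show ?thesis
      using sep_new 2 subset by auto
  qed
qed

lemma clq_contract: "{n \<in> nodes T'. u \<in> clq T' n} = contract {C, C'} C' ` {n \<in> nodes T. u \<in> clq T n}"
proof (intro equalityI subsetI)
  fix x assume "x \<in> {n \<in> nodes T'. u \<in> clq T' n}"
  then have "x \<in> nodes T" "u \<in> clq T x" "x = contract {C, C'} C' x"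
    using clq' by (auto simp: nodes' contract_def)
  then show "x \<in> contract {C, C'} C' ` {n \<in> nodes T. u \<in> clq T n}"
    by blast
next
  fix x assume "x \<in> contract {C, C'} C' ` {n \<in> nodes T. u \<in> clq T n}"
  then obtain n where "n \<in> nodes T" "u \<in> clq T n" "x = contract {C, C'} C' n"
    by blast
  then show "x \<in> {n \<in> nodes T'. u \<in> clq T' n}"
    using ends subset clq' by (cases "n \<in> {C, C'}") (auto simp: nodes')
qed

lemma result_running_intersection: "conn_on (edges T') {n \<in> nodes T'. u \<in> clq T' n}"
  unfolding clq_contract edges_contract
  by (simp add: conn_on_contract valid_ct_running_intersection[OF valid])

lemma result_valid: "valid_ct T'"
  using result_tree_graph result_finite_clq result_sep result_running_intersection
  by (rule valid_ctI)

end

lemma op_remove_valid: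
  assumes "valid_ct T" and "op_remove T T'"
  shows "valid_ct T'"
proof -
  obtain C C' where CC': "{C, C'} \<in> edges T" "clq T C \<subseteq> clq T C'"
    and nodes_edges: "nodes T' = nodes T - {C}"
      "edges T' = {e \<in> edges T. C \<notin> e} \<union> {{m, C'} | m. {m, C} \<in> edges T \<and> m \<noteq> C'}"
    and clq': "\<forall>n\<in>nodes T'. clq T' n = clq T n \<and> bel T' n = bel T n"
    and sep_old: "\<forall>e\<in>edges T. C \<notin> e \<longrightarrow> sep T' e = sep T e \<and> sbel T' e = sbel T e"
    and sep_new: "\<forall>m. {m, C} \<in> edges T \<longrightarrow> m \<noteq> C' \<longrightarrow>
       sep T' {m, C'} = clq T m \<inter> clq T C' \<and> sbel T' {m, C'} = sbel T {m, C}"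
    using assms(2) unfolding op_remove_def by (-, elim exE conjE) (rule that, assumption+)
  have "clique_removal T T' C C'"
    by unfold_locales (fact assms(1) CC' nodes_edges | use clq' sep_old sep_new in blast)+
  then show ?thesis
    by (rule clique_removal.result_valid)
qed

lemma tree_op_valid: "valid_ct T \<Longrightarrow> tree_op D T T' \<Longrightarrow> valid_ct T'"
  unfolding tree_op_def using op_restrict_valid op_exact_valid op_local_valid op_remove_valid by blast

lemma forest_step_valid:
  assumes valid: "\<forall>T\<in>set F. valid_ct T" and step: "forest_step D F F'"
  shows "\<forall>T\<in>set F'. valid_ct T"
proof -
  obtain i where i: "i < length F"
    and F': "F' = take i F @ drop (Suc i) F \<or> (\<exists>T'. tree_op D (F ! i) T' \<and> F' = F[i := T'])"
    using step unfolding forest_step_def by blast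
  show ?thesis
  proof (cases "F' = take i F @ drop (Suc i) F")
    case True
    then have "set F' \<subseteq> set F"
      by (metis set_append Un_least set_take_subset set_drop_subset)
    then show ?thesis
      using valid by blast
  next
    case False
    then obtain T' where T': "tree_op D (F ! i) T'" "F' = F[i := T']"
      using F' by blast
    have "valid_ct T'"
      using tree_op_valid[OF _ T'(1)] valid i by simp
    then show ?thesis
      using valid T'(2) set_update_subset_insert by fastforce
  qed
qed

theorem proposition1:
  fixes D :: "'v \<Rightarrow> 's set"
    and F F' :: "('n, 'v, 's) forest"
  assumes "\<forall>v. finite (D v)"
    and "\<forall>T\<in>set F. ct_struct T \<and> ct_nonneg D T \<and> valid_ct T \<and> calibrated D T"
    and "(forest_step D)\<^sup>*\<^sup>* F F'"
  shows "\<forall>T\<in>set F'. valid_ct T"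
  using assms(3)
proof induction
  case base
  then show ?case
    using assms(2) by blast
next
  case (step F'' F')
  then show ?case
    using forest_step_valid by blast
qed

end
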